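(* Let $n\geq 1$ and $a,b\in\mathbb{C}$. Let $\mathcal{P}_n$ be the set of Catalan paths of order $n$. Then $$\sum_{P\in\mathcal{P}_n}a^{\,n-\mathrm{enor}(P)}b^{\,\mathrm{enor}(P)}=\sum_{P\in\mathcal{P}_n}a^{\,n-\mathrm{valley}(P)}b^{\,\mathrm{valley}(P)},$$ and both equal $\sum_{k=0}^{n-1}\frac{1}{n}\binom{n}{k}\binom{n}{k+1}a^{n-k}b^k$.
   Context: A Catalan path of order $n$ is a word $P=p_1p_2\cdots p_{2n}$ in the steps $\mathbf N=(0,1)$ and $\mathbf E=(1,0)$ with $n$ of each, describing a lattice path from $(0,0)$ to $(n,n)$ that never goes below the line $y=x$. $\mathrm{valley}(P)$ is the number of indices $i$ with $p_i=\mathbf E$ and $p_{i+1}=\mathbf N$. $\mathrm{enor}(P)$ is the number of indices $i\in\{1,\dots,n\}$ with $p_{2i}=\mathbf N$ (north steps in even positions). *)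

theory Defs
  imports Complex_Main
begin

text \<open>Steps: N = (0,1), E = (1,0). A path is a list of steps; position i (1-based)
  of the word corresponds to list index i - 1.\<close>

datatype step = N | E

definition count_step :: "step \<Rightarrow> step list \<Rightarrow> nat" where
  "count_step s P = length (filter (\<lambda>x. x = s) P)"

definition catalan_path :: "nat \<Rightarrow> step list \<Rightarrow> bool" where
  "catalan_path n P \<longleftrightarrow> length P = 2 * n \<and> count_step N P = n \<and> count_step E P = n \<and>
     (\<forall>k \<le> length P. count_step E (take k P) \<le> count_step N (take k P))"

definition catalan_paths :: "nat \<Rightarrow> step list set" where
  "catalan_paths n = {P. catalan_path n P}"

definition valley :: "step list \<Rightarrow> nat" where
  "valley P = card {i. 1 \<le> i \<and> i < length P \<and> P ! (i - 1) = E \<and> P ! i = N}"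

definition enor :: "step list \<Rightarrow> nat" where
  "enor P = card {i \<in> {1 .. length P div 2}. P ! (2 * i - 1) = N}"

end

theory Submission
  imports Defs
begin

text \<open>Both statistics are counted on ballot paths: words with \<open>x\<close> east and \<open>y\<close> north steps
  that never go below the diagonal, split according to the last step in the case of valleys.
  Removing the last step yields Pascal-type recurrences in \<open>x\<close> and \<open>y\<close>; explicit differences
  of products of binomial coefficients satisfy the same recurrences and boundary values, hence
  give the counts. On the diagonal \<open>x = y = n\<close> both counts become
  \<open>C(n-1,k) C(n,k) - C(n,k+1) C(n-1,k-1) = C(n,k) C(n,k+1) / n\<close>, the Narayana numbers.\<close>

section \<open>Binomial coefficients on the integers\<close>

text \<open>Extending by zero makes Pascal's rule hold for every \<open>k\<close>, so the identities below need no
  case distinctions on the lower index.\<close>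

definition binom :: "int \<Rightarrow> int \<Rightarrow> int" where
  "binom n k = (if 0 \<le> n \<and> 0 \<le> k then int (nat n choose nat k) else 0)"

lemma binom_neg_right [simp]: "k < 0 \<Longrightarrow> binom n k = 0"
  by (simp add: binom_def)

lemma binom_neg_left [simp]: "n < 0 \<Longrightarrow> binom n k = 0"
  by (simp add: binom_def)

lemma binom_eq_0_if_less: "n < k \<Longrightarrow> binom n k = 0"
  by (auto simp: binom_def)

lemma binom_0_left [simp]: "binom 0 k = of_bool (k = 0)"
  by (simp add: binom_def)

lemma binom_0_right [simp]: "0 \<le> n \<Longrightarrow> binom n 0 = 1"
  by (simp add: binom_def)

lemma binom_pascal:
  assumes "1 \<le> n"
  shows "binom n k = binom (n - 1) (k - 1) + binom (n - 1) k"
proof (cases "k \<le> 0")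
  case True
  then show ?thesis using assms by (cases "k = 0") (auto simp: binom_def)
next
  case False
  then have "nat n choose nat k = (nat n - 1 choose (nat k - 1)) + (nat n - 1 choose nat k)"
    using assms by (intro choose_reduce_nat) auto
  then show ?thesis using assms False by (simp add: binom_def nat_diff_distrib')
qed

lemma binom_symmetric:
  assumes "0 \<le> n"
  shows "binom n (n - k) = binom n k"
proof (cases "0 \<le> k \<and> k \<le> n")
  case True
  then have "nat (n - k) = nat n - nat k" "nat k \<le> nat n" by auto
  then show ?thesis using True binomial_symmetric[of "nat k" "nat n"] by (simp add: binom_def)
next
  case False
  then show ?thesis using assms by (auto simp: binom_def)
qed

section \<open>Closed forms\<close>

text \<open>For \<open>x \<le> y\<close>, the number of ballot paths with \<open>x\<close> east and \<open>y\<close> north steps and \<open>k\<close> valleys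
  that end with an east step, respectively with a north step (for \<open>x = 0\<close> only the path \<open>N\<^sup>y\<close>).\<close>

definition valley_E_formula :: "int \<Rightarrow> int \<Rightarrow> int \<Rightarrow> int" where
  "valley_E_formula x y k = binom (x - 1) k * binom y k - binom x (k + 1) * binom (y - 1) (k - 1)"

definition valley_N_formula :: "int \<Rightarrow> int \<Rightarrow> int \<Rightarrow> int" where
  "valley_N_formula x y k =
     (if x = 0 then of_bool (0 < y \<and> k = 0)
      else binom (x - 1) (k - 1) * binom (y - 1) k - binom (x - 1) k * binom (y - 1) (k - 1))"

lemma valley_E_formula_rec:
  assumes "1 \<le> x" "1 \<le> y"
  shows "valley_E_formula x y k = valley_E_formula (x - 1) y k + valley_N_formula (x - 1) y k"
proof (cases "x = 1")
  case True
  have "binom 1 (k + 1) = of_bool (k = 0)" if "0 \<le> k"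
    using that binom_eq_0_if_less[of 1 "k + 1"] by (cases "k = 0") (auto simp: binom_def)
  with True assms show ?thesis
    by (cases "0 \<le> k") (auto simp: valley_E_formula_def valley_N_formula_def)
next
  case False
  have "binom (x - 1) k = binom (x - 2) (k - 1) + binom (x - 2) k"
       "binom x (k + 1) = binom (x - 1) k + binom (x - 1) (k + 1)"
       "binom y k = binom (y - 1) (k - 1) + binom (y - 1) k"
    using binom_pascal assms False by simp_all
  then show ?thesis using False
    by (simp add: valley_E_formula_def valley_N_formula_def algebra_simps)
qed

lemma valley_N_formula_rec:
  assumes "0 \<le> x" "x < y"
  shows "valley_N_formula x y k =
    of_bool (x = 0 \<and> y = 1 \<and> k = 0) + valley_E_formula x (y - 1) (k - 1) + valley_N_formula x (y - 1) k"
proof (cases "x = 0")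
  case True
  then show ?thesis using assms
    by (cases "0 \<le> k") (auto simp: valley_E_formula_def valley_N_formula_def)
next
  case False
  have "binom (y - 1) k = binom (y - 2) (k - 1) + binom (y - 2) k"
       "binom (y - 1) (k - 1) = binom (y - 2) (k - 2) + binom (y - 2) (k - 1)"
       "binom x k = binom (x - 1) (k - 1) + binom (x - 1) k"
    using binom_pascal[of "y - 1"] binom_pascal[of x] assms False by simp_all
  then show ?thesis using False assms
    by (simp add: valley_E_formula_def valley_N_formula_def algebra_simps)
qed

lemma valley_N_formula_diag: "valley_N_formula x x k = 0"
  by (simp add: valley_N_formula_def)

lemma narayana_valley_E_formula:
  assumes "1 \<le> n"
  shows "int n * valley_E_formula (int n) (int n) (int k) = int ((n choose k) * (n choose Suc k))"
proof (cases k)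
  case 0
  then show ?thesis using assms by (simp add: valley_E_formula_def binom_def)
next
  case (Suc j)
  define A B X Y where defs: "A = n choose k" "B = n choose Suc k"
    "X = n - 1 choose k" "Y = n - 1 choose j"
  have "Suc k * B = n * X" "k * A = n * Y"
    using binomial_absorption[of k n] binomial_absorption[of j n] Suc by (simp_all add: defs)
  then have absorb: "int n * int X = (int k + 1) * int B" "int n * int Y = int k * int A"
    by (metis of_nat_mult of_nat_Suc add.commute)+
  have formula: "valley_E_formula (int n) (int n) (int k) = int X * int A - int B * int Y"
    using Suc assms by (simp add: defs valley_E_formula_def binom_def nat_diff_distrib' nat_add_distrib)
  have "int n * valley_E_formula (int n) (int n) (int k)
      = (int n * int X) * int A - (int n * int Y) * int B"
    unfolding formula by (simp add: algebra_simps)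
  also have "\<dots> = int A * int B"
    unfolding absorb by (simp add: algebra_simps)
  finally show ?thesis by (simp add: defs)
qed

text \<open>For \<open>x \<le> y\<close>, the number of ballot paths with \<open>x\<close> east and \<open>y\<close> north steps having \<open>k\<close> north steps in
  even positions. Of the \<open>x + y\<close> positions, \<open>m\<close> are even and \<open>m + p\<close> odd, so the first product
  counts all such words and the subtracted one those that go below the diagonal.\<close>

definition enor_formula :: "int \<Rightarrow> int \<Rightarrow> int \<Rightarrow> int" where
  "enor_formula x y k = (let m = (x + y) div 2; p = (x + y) mod 2 in
     binom m k * binom (m + p) (y - k) - binom (m + 1) (k + 1) * binom (m + p - 1) (y - k))"

lemma enor_formula_even:
  "x + y = 2 * m \<Longrightarrow>
    enor_formula x y k = binom m k * binom m (y - k) - binom (m + 1) (k + 1) * binom (m - 1) (y - k)"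
  by (simp add: enor_formula_def)

lemma enor_formula_odd:
  "x + y = 2 * m + 1 \<Longrightarrow>
    enor_formula x y k = binom m k * binom (m + 1) (y - k) - binom (m + 1) (k + 1) * binom m (y - k)"
  by (simp add: enor_formula_def)

lemma enor_formula_rec:
  assumes "0 \<le> x" "1 \<le> y"
  shows "enor_formula x y k = enor_formula (x - 1) y k + enor_formula x (y - 1) (k - of_bool (even (x + y)))"
proof (cases "even (x + y)")
  case True
  then obtain m where m: "x + y = 2 * m" by (rule evenE)
  have "binom m k = binom (m - 1) (k - 1) + binom (m - 1) k"
       "binom (m + 1) (k + 1) = binom m k + binom m (k + 1)"
    using binom_pascal[of m] binom_pascal[of "m + 1"] m assms by simp_all
  then show ?thesis
    using True enor_formula_even[OF m, of k] enor_formula_odd[of "x - 1" y "m - 1" k]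
      enor_formula_odd[of x "y - 1" "m - 1" "k - 1"] m
    by (simp add: algebra_simps)
next
  case False
  then obtain m where m: "x + y = 2 * m + 1" by (rule oddE)
  show ?thesis
  proof (cases "m = 0")
    case True
    then have "x = 0" "y = 1" using m assms by auto
    then show ?thesis by (simp add: enor_formula_def binom_def)
  next
    case False
    have "binom (m + 1) (y - k) = binom m (y - k - 1) + binom m (y - k)"
         "binom m (y - k) = binom (m - 1) (y - k - 1) + binom (m - 1) (y - k)"
      using binom_pascal[of "m + 1"] binom_pascal[of m] m assms False by simp_all
    then show ?thesis
      using \<open>odd (x + y)\<close> enor_formula_odd[OF m, of k] enor_formula_even[of "x - 1" y m k]
        enor_formula_even[of x "y - 1" m k] m
      by (simp add: algebra_simps)
  qed
qed

lemma enor_formula_neg_left: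
  assumes "0 \<le> y"
  shows "enor_formula (-1) y k = 0"
proof (cases "even (-1 + y)")
  case True
  then obtain m where m: "-1 + y = 2 * m" by (rule evenE)
  then show ?thesis using enor_formula_even[OF m, of k] by (cases "k \<le> m") (auto simp: binom_eq_0_if_less)
next
  case False
  then obtain m where m: "-1 + y = 2 * m + 1" by (rule oddE)
  then show ?thesis using enor_formula_odd[OF m, of k] by (cases "k \<le> m") (auto simp: binom_eq_0_if_less)
qed

lemma enor_formula_below_diag:
  assumes "0 \<le> y"
  shows "enor_formula (y + 1) y k = 0"
  using enor_formula_odd[of "y + 1" y y k] binom_symmetric[of "y + 1" "k + 1"] binom_symmetric[of y k] assms
  by simp

lemma enor_formula_origin: "enor_formula 0 0 k = of_bool (k = 0)"
  by (auto simp: enor_formula_def binom_def)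

lemma enor_formula_diag:
  assumes "1 \<le> n"
  shows "enor_formula n n k = valley_E_formula n n k"
proof -
  have "binom n (n - k) = binom n k" "binom (n - 1) (n - k) = binom (n - 1) (k - 1)"
       "binom n k = binom (n - 1) (k - 1) + binom (n - 1) k"
       "binom (n + 1) (k + 1) = binom n k + binom n (k + 1)"
    using binom_symmetric[of n k] binom_symmetric[of "n - 1" "k - 1"]
      binom_pascal[of n] binom_pascal[of "n + 1"] assms by simp_all
  then show ?thesis
    using enor_formula_even[of n n n k] unfolding valley_E_formula_def by (simp add: algebra_simps)
qed

section \<open>Ballot paths\<close>

definition ballot :: "step list \<Rightarrow> bool" where
  "ballot P \<longleftrightarrow> (\<forall>k \<le> length P. count_step E (take k P) \<le> count_step N (take k P))"

definition ballot_paths :: "nat \<Rightarrow> nat \<Rightarrow> step list set" where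
  "ballot_paths x y = {P. count_step E P = x \<and> count_step N P = y \<and> ballot P}"

lemma count_step_snoc: "count_step s (P @ [t]) = count_step s P + of_bool (t = s)"
  by (simp add: count_step_def)

lemma count_step_N_plus_E: "count_step N P + count_step E P = length P"
proof (induction P)
  case (Cons s P)
  then show ?case by (cases s) (simp_all add: count_step_def)
qed (simp add: count_step_def)

lemma ballot_Nil: "ballot []"
  by (simp add: ballot_def count_step_def)

lemma ballot_count_le: "ballot P \<Longrightarrow> count_step E P \<le> count_step N P"
  unfolding ballot_def by (metis order_refl take_all)

lemma ballot_snoc: "ballot (P @ [s]) \<longleftrightarrow> ballot P \<and> count_step E (P @ [s]) \<le> count_step N (P @ [s])"
proof -
  have "(\<forall>k \<le> length (P @ [s]). Q k) \<longleftrightarrow> (\<forall>k \<le> length P. Q k) \<and> Q (length (P @ [s]))" for Q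
    by (auto simp: le_Suc_eq)
  then show ?thesis unfolding ballot_def by simp
qed

lemma valley_snoc: "valley (Q @ [s]) = valley Q + of_bool (s = N \<and> Q \<noteq> [] \<and> last Q = E)"
proof -
  let ?V = "\<lambda>P. {i. 1 \<le> i \<and> i < length P \<and> P ! (i - 1) = E \<and> P ! i = N}"
  have "?V (Q @ [s]) = ?V Q \<union> (if s = N \<and> Q \<noteq> [] \<and> last Q = E then {length Q} else {})"
    by (cases "Q = []") (auto simp: nth_append last_conv_nth less_Suc_eq)
  moreover have "finite (?V Q)" by (rule finite_subset[of _ "{..<length Q}"]) auto
  ultimately show ?thesis by (simp add: valley_def)
qed

lemma enor_snoc: "enor (Q @ [s]) = enor Q + of_bool (odd (length Q) \<and> s = N)"
proof -
  let ?V = "\<lambda>P. {i \<in> {1 .. length P div 2}. P ! (2 * i - 1) = N}"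
  have "?V (Q @ [s]) = ?V Q \<union> (if odd (length Q) \<and> s = N then {Suc (length Q) div 2} else {})"
    by (auto simp: nth_append)
  then show ?thesis by (simp add: enor_def)
qed

lemma length_ballot_paths: "P \<in> ballot_paths x y \<Longrightarrow> length P = x + y"
  using count_step_N_plus_E[of P] by (simp add: ballot_paths_def)

lemma catalan_paths_eq_ballot_paths: "catalan_paths n = ballot_paths n n"
  by (auto simp: catalan_paths_def catalan_path_def ballot_paths_def ballot_def)
    (metis count_step_N_plus_E mult_2)

lemma finite_ballot_paths: "finite (ballot_paths x y)"
proof (rule finite_subset)
  show "ballot_paths x y \<subseteq> {P. set P \<subseteq> {N, E} \<and> length P = x + y}"
    using length_ballot_paths step.exhaust by blast
qed (rule finite_lists_length_eq, simp)

lemma ballot_paths_eq_empty: "y < x \<Longrightarrow> ballot_paths x y = {}"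
  using ballot_count_le by (fastforce simp: ballot_paths_def)

lemma Nil_in_ballot_paths: "[] \<in> ballot_paths x y \<longleftrightarrow> x = 0 \<and> y = 0"
  by (auto simp: ballot_paths_def ballot_Nil count_step_def)

lemma snoc_E_in_ballot_paths:
  "Q @ [E] \<in> ballot_paths x y \<longleftrightarrow> 0 < x \<and> x \<le> y \<and> Q \<in> ballot_paths (x - 1) y"
  by (auto simp: ballot_paths_def ballot_snoc count_step_snoc)

lemma snoc_N_in_ballot_paths:
  "Q @ [N] \<in> ballot_paths x y \<longleftrightarrow> 0 < y \<and> Q \<in> ballot_paths x (y - 1)"
  by (auto simp: ballot_paths_def ballot_snoc count_step_snoc dest: ballot_count_le)

lemma card_last_eq_card_snoc:
  "card {P \<in> A. P \<noteq> [] \<and> last P = s \<and> Phi P} = card {Q. Q @ [s] \<in> A \<and> Phi (Q @ [s])}"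
proof -
  have "{P \<in> A. P \<noteq> [] \<and> last P = s \<and> Phi P} = (\<lambda>Q. Q @ [s]) ` {Q. Q @ [s] \<in> A \<and> Phi (Q @ [s])}"
    by (auto simp: image_iff) (metis append_butlast_last_id)
  then show ?thesis by (simp add: card_image inj_on_def)
qed

lemma card_filter_split_last:
  assumes "finite A"
  shows "card {P \<in> A. Phi P} = card {P \<in> A. P = [] \<and> Phi P}
    + card {P \<in> A. P \<noteq> [] \<and> last P = E \<and> Phi P} + card {P \<in> A. P \<noteq> [] \<and> last P = N \<and> Phi P}"
proof -
  have "{P \<in> A. Phi P} = {P \<in> A. P = [] \<and> Phi P}
      \<union> ({P \<in> A. P \<noteq> [] \<and> last P = E \<and> Phi P} \<union> {P \<in> A. P \<noteq> [] \<and> last P = N \<and> Phi P})"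
    using step.exhaust by auto
  then show ?thesis using assms by (simp add: card_Un_disjoint disjoint_iff)
qed

lemma card_ballot_paths_split_last:
  "card {P \<in> ballot_paths x y. Phi P} = of_bool (x = 0 \<and> y = 0 \<and> Phi [])
    + card {P \<in> ballot_paths x y. P \<noteq> [] \<and> last P = E \<and> Phi P}
    + card {P \<in> ballot_paths x y. P \<noteq> [] \<and> last P = N \<and> Phi P}"
proof -
  have "{P \<in> ballot_paths x y. P = [] \<and> Phi P} = (if x = 0 \<and> y = 0 \<and> Phi [] then {[]} else {})"
    by (auto simp: Nil_in_ballot_paths)
  then have "card {P \<in> ballot_paths x y. P = [] \<and> Phi P} = of_bool (x = 0 \<and> y = 0 \<and> Phi [])"
    by simp
  then show ?thesis using card_filter_split_last[OF finite_ballot_paths, of x y Phi] by linarith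
qed

lemma card_ballot_paths_last_E:
  "card {P \<in> ballot_paths x y. P \<noteq> [] \<and> last P = E \<and> Phi P} =
    (if 0 < x \<and> x \<le> y then card {Q \<in> ballot_paths (x - 1) y. Phi (Q @ [E])} else 0)"
  unfolding card_last_eq_card_snoc snoc_E_in_ballot_paths by simp

lemma card_ballot_paths_last_N:
  "card {P \<in> ballot_paths x y. P \<noteq> [] \<and> last P = N \<and> Phi P} =
    (if 0 < y then card {Q \<in> ballot_paths x (y - 1). Phi (Q @ [N])} else 0)"
  unfolding card_last_eq_card_snoc snoc_N_in_ballot_paths by simp

section \<open>Recurrences for the counts\<close>

text \<open>The statistic value \<open>k\<close> ranges over \<open>int\<close>, so that the shift to \<open>k - 1\<close> in the recurrences
  needs no special treatment of \<open>k = 0\<close>.\<close>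

definition valley_E_count :: "nat \<Rightarrow> nat \<Rightarrow> int \<Rightarrow> nat" where
  "valley_E_count x y k = card {P \<in> ballot_paths x y. P \<noteq> [] \<and> last P = E \<and> int (valley P) = k}"

definition valley_N_count :: "nat \<Rightarrow> nat \<Rightarrow> int \<Rightarrow> nat" where
  "valley_N_count x y k = card {P \<in> ballot_paths x y. P \<noteq> [] \<and> last P = N \<and> int (valley P) = k}"

definition enor_count :: "nat \<Rightarrow> nat \<Rightarrow> int \<Rightarrow> nat" where
  "enor_count x y k = card {P \<in> ballot_paths x y. int (enor P) = k}"

lemma valley_E_count_rec:
  assumes "0 < x" "x \<le> y"
  shows "valley_E_count x y k = valley_E_count (x - 1) y k + valley_N_count (x - 1) y k"
  using assms card_ballot_paths_last_E[of x y "\<lambda>P. int (valley P) = k"]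
    card_ballot_paths_split_last[of "x - 1" y "\<lambda>P. int (valley P) = k"]
  by (simp add: valley_E_count_def valley_N_count_def valley_snoc)

lemma valley_N_count_rec:
  assumes "0 < y"
  shows "valley_N_count x y k =
    of_bool (x = 0 \<and> y = 1 \<and> k = 0) + valley_E_count x (y - 1) (k - 1) + valley_N_count x (y - 1) k"
proof -
  let ?valley_snoc_N = "\<lambda>Q. int (valley Q + of_bool (Q \<noteq> [] \<and> last Q = E)) = k"
  have "valley_N_count x y k = card {Q \<in> ballot_paths x (y - 1). ?valley_snoc_N Q}"
    using assms card_ballot_paths_last_N[of x y "\<lambda>P. int (valley P) = k"]
    by (simp add: valley_N_count_def valley_snoc)
  also have "\<dots> = of_bool (x = 0 \<and> y = 1 \<and> k = 0)
      + valley_E_count x (y - 1) (k - 1) + valley_N_count x (y - 1) k"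
    using assms card_ballot_paths_split_last[of x "y - 1" ?valley_snoc_N]
    by (simp add: valley_E_count_def valley_N_count_def valley_def algebra_simps cong: conj_cong)
  finally show ?thesis .
qed

lemma enor_count_rec:
  assumes "x \<le> y" "0 < y"
  shows "enor_count x y k =
    (if x = 0 then 0 else enor_count (x - 1) y k) + enor_count x (y - 1) (k - of_bool (even (x + y)))"
proof -
  have "odd (x + (y - 1)) \<longleftrightarrow> even (x + y)" using assms by presburger
  then have N: "{Q \<in> ballot_paths x (y - 1). int (enor (Q @ [N])) = k}
      = {Q \<in> ballot_paths x (y - 1). int (enor Q) = k - of_bool (even (x + y))}"
    by (auto simp: enor_snoc length_ballot_paths)
  have E: "{Q \<in> ballot_paths (x - 1) y. int (enor (Q @ [E])) = k}
      = {Q \<in> ballot_paths (x - 1) y. int (enor Q) = k}"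
    by (simp add: enor_snoc)
  show ?thesis
    using assms card_ballot_paths_split_last[of x y "\<lambda>P. int (enor P) = k"]
    unfolding card_ballot_paths_last_E card_ballot_paths_last_N N E enor_count_def
    by simp
qed

lemma valley_counts_eq_formulas:
  assumes "x \<le> y"
  shows "int (valley_E_count x y k) = valley_E_formula x y k
       \<and> int (valley_N_count x y k) = valley_N_formula x y k"
  using assms
proof (induction "x + y" arbitrary: x y k rule: less_induct)
  case less
  show ?case
  proof (cases "y = 0")
    case True
    then have "x = 0" using less.prems by simp
    with True show ?thesis
      using card_ballot_paths_last_E[of 0 0] card_ballot_paths_last_N[of 0 0]
      by (simp add: valley_E_count_def valley_N_count_def valley_E_formula_def valley_N_formula_def)
  next
    case False
    have E: "int (valley_E_count x y k) = valley_E_formula x y k"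
    proof (cases "x = 0")
      case True
      then show ?thesis using card_ballot_paths_last_E[of 0 y]
        by (simp add: valley_E_count_def valley_E_formula_def)
    next
      case False
      then show ?thesis
        using valley_E_count_rec[of x y k] valley_E_formula_rec[of x y k] less \<open>y \<noteq> 0\<close>
        by (simp add: of_nat_diff)
    qed
    have N: "int (valley_N_count x y k) = valley_N_formula x y k"
    proof (cases "x = y")
      case True
      then show ?thesis
        using valley_N_count_rec[of y x k] ballot_paths_eq_empty[of "y - 1" x] \<open>y \<noteq> 0\<close>
        by (simp add: valley_E_count_def valley_N_count_def valley_N_formula_diag)
    next
      case False
      then show ?thesis
        using valley_N_count_rec[of y x k] valley_N_formula_rec[of x y k] \<open>y \<noteq> 0\<close>
          less.hyps[of x "y - 1" k] less.hyps[of x "y - 1" "k - 1"] less.prems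
        by (simp add: of_nat_diff)
    qed
    from E N show ?thesis ..
  qed
qed

lemma enor_count_eq_formula:
  assumes "x \<le> y"
  shows "int (enor_count x y k) = enor_formula x y k"
  using assms
proof (induction "x + y" arbitrary: x y k rule: less_induct)
  case less
  show ?case
  proof (cases "y = 0")
    case True
    then have "x = 0" using less.prems by simp
    with True show ?thesis
      using card_ballot_paths_split_last[of 0 0 "\<lambda>P. int (enor P) = k"]
        card_ballot_paths_last_E[of 0 0] card_ballot_paths_last_N[of 0 0]
      by (simp add: enor_count_def enor_formula_origin enor_def)
  next
    case False
    have E: "int (if x = 0 then 0 else enor_count (x - 1) y k) = enor_formula (int x - 1) y k"
      using less enor_formula_neg_left[of y k] by (simp add: of_nat_diff)
    have N: "int (enor_count x (y - 1) j) = enor_formula x (int y - 1) j" for j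
    proof (cases "x = y")
      case True
      then show ?thesis
        using ballot_paths_eq_empty[of "y - 1" x] enor_formula_below_diag[of "int y - 1" j] \<open>y \<noteq> 0\<close>
        by (simp add: enor_count_def)
    next
      case False
      then show ?thesis using less \<open>y \<noteq> 0\<close> by (simp add: of_nat_diff)
    qed
    show ?thesis
      using enor_count_rec[of x y k] enor_formula_rec[of x y k] E N less.prems \<open>y \<noteq> 0\<close>
      by simp
  qed
qed

section \<open>The Narayana distribution\<close>

lemma sum_by_narayana_distribution:
  fixes a b :: "'a :: field_char_0"
  assumes "1 \<le> n" "finite A"
    and distribution: "\<And>k. n * card {P \<in> A. g P = k} = (n choose k) * (n choose Suc k)"
  shows "(\<Sum>P\<in>A. a ^ (n - g P) * b ^ g P) =
    (\<Sum>k = 0..n - 1. (1 / of_nat n) * of_nat (n choose k) * of_nat (n choose (k + 1)) * a ^ (n - k) * b ^ k)"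
proof -
  have "g P \<in> {0..n - 1}" if "P \<in> A" for P
  proof (rule ccontr)
    assume "g P \<notin> {0..n - 1}"
    then have "card {Q \<in> A. g Q = g P} = 0"
      using distribution[of "g P"] \<open>1 \<le> n\<close> by (simp add: binomial_eq_0)
    then show False using that \<open>finite A\<close> by (auto simp: card_eq_0_iff)
  qed
  then have "(\<Sum>P\<in>A. a ^ (n - g P) * b ^ g P)
      = (\<Sum>k = 0..n - 1. \<Sum>P \<in> {P \<in> A. g P = k}. a ^ (n - g P) * b ^ g P)"
    by (intro sum.group[symmetric] \<open>finite A\<close>) auto
  also have "\<dots> = (\<Sum>k = 0..n - 1. of_nat (card {P \<in> A. g P = k}) * (a ^ (n - k) * b ^ k))"
    by (intro sum.cong) auto
  also have "\<dots> = (\<Sum>k = 0..n - 1.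
      (1 / of_nat n) * of_nat (n choose k) * of_nat (n choose (k + 1)) * a ^ (n - k) * b ^ k)"
  proof (intro sum.cong refl)
    fix k
    have "of_nat n * (of_nat (card {P \<in> A. g P = k}) :: 'a)
        = of_nat (n choose k) * of_nat (n choose Suc k)"
      using distribution[of k] by (metis of_nat_mult)
    then show "of_nat (card {P \<in> A. g P = k}) * (a ^ (n - k) * b ^ k) =
        (1 / of_nat n) * of_nat (n choose k) * of_nat (n choose (k + 1)) * a ^ (n - k) * b ^ k"
      using \<open>1 \<le> n\<close> by (simp add: field_simps)
  qed
  finally show ?thesis .
qed

lemma narayana_card_catalan_paths_valley:
  assumes "1 \<le> n"
  shows "n * card {P \<in> catalan_paths n. valley P = k} = (n choose k) * (n choose Suc k)"
proof -
  have "card {P \<in> catalan_paths n. valley P = k} = valley_E_count n n k + valley_N_count n n k"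
    using card_ballot_paths_split_last[of n n "\<lambda>P. int (valley P) = k"] assms
    by (simp add: catalan_paths_eq_ballot_paths valley_E_count_def valley_N_count_def)
  then have "int (card {P \<in> catalan_paths n. valley P = k}) = valley_E_formula n n k"
    using valley_counts_eq_formulas[of n n k] valley_N_formula_diag by simp
  then have "int (n * card {P \<in> catalan_paths n. valley P = k}) = int ((n choose k) * (n choose Suc k))"
    using narayana_valley_E_formula[OF assms, of k] by simp
  then show ?thesis by (simp only: of_nat_eq_iff)
qed

lemma narayana_card_catalan_paths_enor:
  assumes "1 \<le> n"
  shows "n * card {P \<in> catalan_paths n. enor P = k} = (n choose k) * (n choose Suc k)"
proof -
  have "int (card {P \<in> catalan_paths n. enor P = k}) = valley_E_formula n n k"
    using enor_count_eq_formula[of n n k] enor_formula_diag[of n k] assms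
    by (simp add: enor_count_def catalan_paths_eq_ballot_paths)
  then have "int (n * card {P \<in> catalan_paths n. enor P = k}) = int ((n choose k) * (n choose Suc k))"
    using narayana_valley_E_formula[OF assms, of k] by simp
  then show ?thesis by (simp only: of_nat_eq_iff)
qed

theorem theorem4p1:
  fixes n :: nat and a b :: complex
  assumes "n \<ge> 1"
  shows "(\<Sum>P\<in>catalan_paths n. a ^ (n - enor P) * b ^ enor P)
           = (\<Sum>P\<in>catalan_paths n. a ^ (n - valley P) * b ^ valley P)
       \<and> (\<Sum>P\<in>catalan_paths n. a ^ (n - valley P) * b ^ valley P)
           = (\<Sum>k = 0..n - 1. (1 / of_nat n) * of_nat (n choose k) * of_nat (n choose (k + 1))
                                * a ^ (n - k) * b ^ k)"
proof -
  have finite: "finite (catalan_paths n)"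
    by (simp add: catalan_paths_eq_ballot_paths finite_ballot_paths)
  show ?thesis
    using sum_by_narayana_distribution[OF assms finite narayana_card_catalan_paths_valley[OF assms],
        where a = a and b = b]
      sum_by_narayana_distribution[OF assms finite narayana_card_catalan_paths_enor[OF assms],
        where a = a and b = b]
    by simp
qed

end
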